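(* Let $Q=\{x\in\mathbb{R}^{n+1}:\sum_{i=1}^{n+1}x_i^2/a_i=1\}$ with $0<a_1<\dots<a_{n+1}$. If a nonsingular periodic billiard trajectory inside $Q$ has odd period, then its first caustic $Q_{\lambda_1}$ is an ellipsoid, i.e. $\lambda_1\in(0,a_1)$. In other words, among all nonsingular billiard trajectories inside $Q$, only those with an ellipsoid as caustic can have odd period.
   Context: Confocal quadrics: $Q_\mu=\{\sum x_i^2/(a_i-\mu)=1\}$; every line of a billiard trajectory inside $Q$ is tangent to $n$ confocal quadrics $Q_{\lambda_1},\ldots,Q_{\lambda_n}$ (caustics), $\lambda_1<\dots<\lambda_n$. The trajectory is nonsingular when $\lambda$ lies in $\{0<\lambda_1<\dots<\lambda_n,\ \lambda_i\in(a_{i-1},a_i)\cup(a_i,a_{i+1})\}$, $a_0=0$. $Q_\mu$ is an ellipsoid exactly when $0<\mu<a_1$. *)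

theory Defs
  imports Complex_Main
begin

text \<open>Points of R^(n+1) are represented as functions nat => real whose
  relevant coordinates are indexed by 1..n+1 (all other coordinates are 0).
  The semi-axes parameters are a 1 < ... < a (n+1).\<close>

definition ipr :: "nat \<Rightarrow> (nat \<Rightarrow> real) \<Rightarrow> (nat \<Rightarrow> real) \<Rightarrow> real" where
  "ipr n x y = (\<Sum>i=1..n+1. x i * y i)"

definition is_point :: "nat \<Rightarrow> (nat \<Rightarrow> real) \<Rightarrow> bool" where
  "is_point n x \<longleftrightarrow> (\<forall>i. i \<notin> {1..n+1} \<longrightarrow> x i = 0)"

definition confocal :: "nat \<Rightarrow> (nat \<Rightarrow> real) \<Rightarrow> real \<Rightarrow> (nat \<Rightarrow> real) set" where
  "confocal n a \<mu> = {x. is_point n x \<and> (\<Sum>i=1..n+1. (x i)\<^sup>2 / (a i - \<mu>)) = 1}"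

text \<open>Tangency of the line {x + t v} to the quadric Q_mu (mu not one of the a_i):
  the quadratic equation in t for the intersection has vanishing discriminant.\<close>
definition line_tangent :: "nat \<Rightarrow> (nat \<Rightarrow> real) \<Rightarrow> real \<Rightarrow> (nat \<Rightarrow> real) \<Rightarrow> (nat \<Rightarrow> real) \<Rightarrow> bool" where
  "line_tangent n a \<mu> x v \<longleftrightarrow>
     (\<forall>i\<in>{1..n+1}. a i \<noteq> \<mu>) \<and>
     (\<Sum>i=1..n+1. x i * v i / (a i - \<mu>))\<^sup>2
       = (\<Sum>i=1..n+1. (v i)\<^sup>2 / (a i - \<mu>)) * ((\<Sum>i=1..n+1. (x i)\<^sup>2 / (a i - \<mu>)) - 1)"

definition caustic_params :: "nat \<Rightarrow> (nat \<Rightarrow> real) \<Rightarrow> (nat \<Rightarrow> real) \<Rightarrow> (nat \<Rightarrow> real) \<Rightarrow> real set" where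
  "caustic_params n a x y = {\<mu>. line_tangent n a \<mu> x (\<lambda>i. y i - x i)}"

text \<open>Billiard trajectory inside Q = Q_0: consecutive vertices on Q and distinct,
  and reflection law at every vertex: the outgoing direction is a positive multiple
  of the mirror image of the incoming direction in the tangent hyperplane
  (normal vector N_i = x_i / a_i).\<close>
definition billiard_trajectory :: "nat \<Rightarrow> (nat \<Rightarrow> real) \<Rightarrow> (nat \<Rightarrow> nat \<Rightarrow> real) \<Rightarrow> bool" where
  "billiard_trajectory n a p \<longleftrightarrow>
     (\<forall>k. p k \<in> confocal n a 0) \<and>
     (\<forall>k. p (Suc k) \<noteq> p k) \<and>
     (\<forall>k. let u = (\<lambda>i. p (Suc k) i - p k i);
              w = (\<lambda>i. p (Suc (Suc k)) i - p (Suc k) i);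
              N = (\<lambda>i. p (Suc k) i / a i)
          in \<exists>c>0. \<forall>i\<in>{1..n+1}. w i = c * (u i - 2 * ipr n u N / ipr n N N * N i))"

end

theory Submission
  imports Defs "HOL-Computational_Algebra.Polynomial"
begin

text \<open>Clearing denominators in the tangency condition turns
  the caustic parameters of the chord into the roots, off the poles a_i, of a real polynomial P
  of degree at most n. One has P(0) > 0, and if all n caustic parameters exceed a_1 then P has
  no root in [0, a_1], so P(a_1) > 0. The value P(a_1) is computed explicitly, and its
  positivity says that the point where the chord line meets the hyperplane x_1 = 0 lies strictly
  inside Q, i.e. between x and y. Hence the first coordinate changes sign at every bounce, which
  is impossible along a closed trajectory of odd period.\<close>

lemma lagrange_identity_weighted:
  fixes x v d :: "'a \<Rightarrow> 'b::field"
  assumes "finite S" "\<And>i. i \<in> S \<Longrightarrow> d i \<noteq> 0"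
  shows "(\<Sum>i\<in>S. \<Sum>j\<in>S. (x i * v j - x j * v i)^2 / (d i * d j))
     = 2 * ((\<Sum>i\<in>S. (v i)^2 / d i) * (\<Sum>i\<in>S. (x i)^2 / d i) - (\<Sum>i\<in>S. x i * v i / d i)^2)"
proof -
  have "(x i * v j - x j * v i)^2 / (d i * d j) =
     (x i)^2 / d i * ((v j)^2 / d j) + (v i)^2 / d i * ((x j)^2 / d j)
       - 2 * ((x i * v i / d i) * (x j * v j / d j))"
    if "i \<in> S" "j \<in> S" for i j using assms(2)[OF that(1)] assms(2)[OF that(2)]
    by (simp add: field_simps power2_eq_square)
  then have "(\<Sum>i\<in>S. \<Sum>j\<in>S. (x i * v j - x j * v i)^2 / (d i * d j))
     = (\<Sum>i\<in>S. \<Sum>j\<in>S. (x i)^2 / d i * ((v j)^2 / d j) + (v i)^2 / d i * ((x j)^2 / d j)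
         - 2 * ((x i * v i / d i) * (x j * v j / d j)))"
    by (intro sum.cong refl) auto
  also have "\<dots> = (\<Sum>i\<in>S. (x i)^2 / d i) * (\<Sum>j\<in>S. (v j)^2 / d j)
      + (\<Sum>i\<in>S. (v i)^2 / d i) * (\<Sum>j\<in>S. (x j)^2 / d j)
      - 2 * ((\<Sum>i\<in>S. x i * v i / d i) * (\<Sum>j\<in>S. x j * v j / d j))"
    unfolding sum_product by (simp only: sum_distrib_left sum_subtractf sum.distrib)
  finally show ?thesis by (simp add: power2_eq_square algebra_simps)
qed

lemma prod_diff2:
  fixes d :: "'a \<Rightarrow> 'b::field"
  assumes "finite I" "i \<in> I" "j \<in> I" "i \<noteq> j" "d i \<noteq> 0" "d j \<noteq> 0"
  shows "(\<Prod>k\<in>I-{i,j}. d k) = (\<Prod>k\<in>I. d k) / (d i * d j)"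
proof -
  have "I - {i,j} = (I - {i}) - {j}" by auto
  then show ?thesis using assms by (simp add: prod_diff1)
qed

text \<open>The product of all a_k - mu times the tangency discriminant of the line x + t v with
  respect to Q_mu, rewritten by Lagrange's identity so that all denominators cancel.\<close>

definition caustic_poly :: "nat set \<Rightarrow> (nat \<Rightarrow> real) \<Rightarrow> (nat \<Rightarrow> real) \<Rightarrow> (nat \<Rightarrow> real) \<Rightarrow> real poly"
  where "caustic_poly I a x v =
    (\<Sum>i\<in>I. smult ((v i)^2) (\<Prod>k\<in>I-{i}. [:a k, -1:]))
    - (\<Sum>i\<in>I. \<Sum>j\<in>I. smult ((x i * v j - x j * v i)^2 / 2) (\<Prod>k\<in>I-{i,j}. [:a k, -1:]))"

lemma poly_caustic_poly:
  "poly (caustic_poly I a x v) \<mu> = (\<Sum>i\<in>I. (v i)^2 * (\<Prod>k\<in>I-{i}. a k - \<mu>))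
     - (\<Sum>i\<in>I. \<Sum>j\<in>I. (x i * v j - x j * v i)^2 / 2 * (\<Prod>k\<in>I-{i,j}. a k - \<mu>))"
  by (simp add: caustic_poly_def poly_sum poly_prod)

lemma degree_prod_linear_le:
  assumes "finite S"
  shows "degree (\<Prod>k\<in>S. [:a k, -1::real:]) \<le> card S"
  using degree_prod_sum_le[OF assms, of "\<lambda>k. [:a k, -1::real:]"] by simp

lemma degree_caustic_poly:
  assumes "finite I" "card I = Suc n"
  shows "degree (caustic_poly I a x v) \<le> n"
proof -
  have card_le: "card (I - {i,j}) \<le> n" "card (I - {i}) \<le> n" if "i \<in> I" for i j
  proof -
    have "card (I - {i,j}) \<le> card (I - {i})" using assms by (intro card_mono) auto
    then show "card (I - {i,j}) \<le> n" "card (I - {i}) \<le> n" using assms that by simp_all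
  qed
  have deg_le: "degree (\<Prod>k\<in>S. [:a k, -1::real:]) \<le> n" if "S \<subseteq> I" "card S \<le> n" for S
    using degree_prod_linear_le[of S a] finite_subset[OF that(1) assms(1)] that(2) by linarith
  show ?thesis
    unfolding caustic_poly_def
    by (intro degree_diff_le degree_sum_le order.trans[OF degree_smult_le] deg_le card_le assms(1))
      auto
qed

lemma poly_caustic_poly_nonpole:
  assumes fin: "finite I" and np: "\<And>k. k \<in> I \<Longrightarrow> a k \<noteq> \<mu>"
  shows "poly (caustic_poly I a x v) \<mu> = (\<Prod>k\<in>I. a k - \<mu>) *
     ((\<Sum>i\<in>I. x i * v i / (a i - \<mu>))^2
       - (\<Sum>i\<in>I. (v i)^2 / (a i - \<mu>)) * ((\<Sum>i\<in>I. (x i)^2 / (a i - \<mu>)) - 1))"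
proof -
  define d where "d k = a k - \<mu>" for k
  define D where "D = (\<Prod>k\<in>I. d k)"
  have dnz: "k \<in> I \<Longrightarrow> d k \<noteq> 0" for k using np by (auto simp: d_def)
  have single: "(\<Sum>i\<in>I. (v i)^2 * (\<Prod>k\<in>I-{i}. a k - \<mu>)) = D * (\<Sum>i\<in>I. (v i)^2 / d i)"
    unfolding sum_distrib_left
    by (intro sum.cong refl) (use dnz fin in \<open>simp add: prod_diff1 D_def d_def\<close>)
  have "(\<Sum>i\<in>I. \<Sum>j\<in>I. (x i * v j - x j * v i)^2 / 2 * (\<Prod>k\<in>I-{i,j}. a k - \<mu>))
     = (\<Sum>i\<in>I. \<Sum>j\<in>I. D / 2 * ((x i * v j - x j * v i)^2 / (d i * d j)))"
    using prod_diff2[OF fin _ _ _ dnz dnz]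
    by (intro sum.cong refl, rename_tac i j, case_tac "i = j") (simp_all add: D_def d_def)
  then have double: "(\<Sum>i\<in>I. \<Sum>j\<in>I. (x i * v j - x j * v i)^2 / 2 * (\<Prod>k\<in>I-{i,j}. a k - \<mu>))
     = D / 2 * (\<Sum>i\<in>I. \<Sum>j\<in>I. (x i * v j - x j * v i)^2 / (d i * d j))"
    by (simp only: sum_distrib_left)
  have "poly (caustic_poly I a x v) \<mu>
      = D * (\<Sum>i\<in>I. (v i)^2 / d i) - D / 2 * (\<Sum>i\<in>I. \<Sum>j\<in>I. (x i * v j - x j * v i)^2 / (d i * d j))"
    unfolding poly_caustic_poly single double ..
  also have "\<dots> = D * (\<Sum>i\<in>I. (v i)^2 / d i) - D / 2 * (2 * ((\<Sum>i\<in>I. (v i)^2 / d i)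
      * (\<Sum>i\<in>I. (x i)^2 / d i) - (\<Sum>i\<in>I. x i * v i / d i)^2))"
    by (simp only: lagrange_identity_weighted[OF fin dnz])
  finally show ?thesis unfolding D_def d_def by (simp add: algebra_simps)
qed

lemma poly_caustic_poly_pole:
  assumes fin: "finite I" and l: "l \<in> I" and np: "\<And>k. k \<in> I - {l} \<Longrightarrow> a k \<noteq> a l"
  shows "poly (caustic_poly I a x v) (a l) = (\<Prod>k\<in>I-{l}. a k - a l) *
     ((v l)^2 - (\<Sum>j\<in>I-{l}. (x l * v j - x j * v l)^2 / (a j - a l)))"
proof -
  define J where "J = I - {l}"
  define d where "d k = a k - a l" for k
  define E where "E = (\<Prod>k\<in>J. d k)"
  define c where "c i j = (x i * v j - x j * v i)^2" for i j
  have dnz: "k \<in> J \<Longrightarrow> d k \<noteq> 0" for k using np by (auto simp: d_def J_def)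
  \<comment> \<open>at mu = a_l only the products omitting the factor a_l - mu survive\<close>
  have vanish: "(\<Prod>k\<in>S. a k - a l) = 0" if "l \<in> S" "finite S" for S
    using that by (intro prod_zero) auto
  have split: "(\<Sum>i\<in>I. f i) = f l + (\<Sum>i\<in>J. f i)" for f :: "nat \<Rightarrow> real"
    unfolding J_def by (rule sum.remove[OF fin l])
  have single: "(\<Sum>i\<in>I. (v i)^2 * (\<Prod>k\<in>I-{i}. a k - a l)) = (v l)^2 * E"
    unfolding split using fin l by (auto simp: vanish E_def J_def d_def intro!: sum.neutral)
  have pair: "(\<Prod>k\<in>I-{l,j}. a k - a l) = E / d j" if "j \<in> J" for j
  proof -
    have "I - {l,j} = J - {j}" by (auto simp: J_def)
    then show ?thesis using that dnz fin by (simp add: prod_diff1 E_def d_def J_def)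
  qed
  have row: "(\<Sum>j\<in>I. c i j / 2 * (\<Prod>k\<in>I-{i,j}. a k - a l)) = c i l / 2 * (E / d i)"
    if "i \<in> J" for i
  proof -
    have "(\<Prod>k\<in>I-{i,j}. a k - a l) = 0" if "j \<in> J" for j
      using fin l \<open>i \<in> J\<close> that by (intro vanish) (auto simp: J_def)
    then have "(\<Sum>j\<in>J. c i j / 2 * (\<Prod>k\<in>I-{i,j}. a k - a l)) = 0" by simp
    then show ?thesis unfolding split using that pair[OF that] by (simp add: insert_commute)
  qed
  have csym: "c i j = c j i" for i j by (simp add: c_def power2_eq_square algebra_simps)
  have double: "(\<Sum>i\<in>I. \<Sum>j\<in>I. c i j / 2 * (\<Prod>k\<in>I-{i,j}. a k - a l)) = E * (\<Sum>j\<in>J. c l j / d j)"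
  proof -
    have "(\<Sum>j\<in>I. c l j / 2 * (\<Prod>k\<in>I-{l,j}. a k - a l)) = (\<Sum>j\<in>J. c l j / 2 * (E / d j))"
      unfolding split by (simp add: c_def pair)
    moreover have "(\<Sum>i\<in>J. \<Sum>j\<in>I. c i j / 2 * (\<Prod>k\<in>I-{i,j}. a k - a l))
        = (\<Sum>j\<in>J. c l j / 2 * (E / d j))"
      using row csym by (intro sum.cong) auto
    ultimately show ?thesis
      unfolding split[of "\<lambda>i. \<Sum>j\<in>I. c i j / 2 * (\<Prod>k\<in>I-{i,j}. a k - a l)"]
      by (simp add: sum.distrib[symmetric] sum_distrib_left field_simps)
  qed
  show ?thesis
    using single double unfolding poly_caustic_poly c_def[symmetric]
    by (simp add: E_def J_def d_def algebra_simps sum_distrib_left sum_subtractf)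
qed

lemma caustic_poly_root_iff:
  assumes "finite I" "\<forall>k\<in>I. a k \<noteq> \<mu>"
  shows "poly (caustic_poly I a x v) \<mu> = 0 \<longleftrightarrow>
    (\<Sum>i\<in>I. x i * v i / (a i - \<mu>))^2
      = (\<Sum>i\<in>I. (v i)^2 / (a i - \<mu>)) * ((\<Sum>i\<in>I. (x i)^2 / (a i - \<mu>)) - 1)"
  using assms by (simp add: poly_caustic_poly_nonpole)

lemma caustic_params_eq_roots:
  "caustic_params n a x y =
     {\<mu>. (\<forall>k\<in>{1..n+1}. a k \<noteq> \<mu>) \<and> poly (caustic_poly {1..n+1} a x (\<lambda>i. y i - x i)) \<mu> = 0}"
  unfolding caustic_params_def line_tangent_def
  by (intro Collect_cong conj_cong refl caustic_poly_root_iff[symmetric]) auto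

lemma ellipsoid_chord_cross_term:
  fixes x y a :: "'a \<Rightarrow> real"
  assumes "(\<Sum>i\<in>I. (x i)^2 / a i) = 1" "(\<Sum>i\<in>I. (y i)^2 / a i) = 1"
  shows "(\<Sum>i\<in>I. x i * (y i - x i) / a i) = - (\<Sum>i\<in>I. (y i - x i)^2 / a i) / 2"
proof -
  have "(\<Sum>i\<in>I. (y i)^2 / a i)
      = (\<Sum>i\<in>I. (x i)^2 / a i + 2 * (x i * (y i - x i) / a i) + (y i - x i)^2 / a i)"
    by (intro sum.cong refl) (simp add: divide_inverse power2_eq_square algebra_simps)
  also have "\<dots> = (\<Sum>i\<in>I. (x i)^2 / a i) + 2 * (\<Sum>i\<in>I. x i * (y i - x i) / a i)
      + (\<Sum>i\<in>I. (y i - x i)^2 / a i)"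
    by (simp only: sum.distrib flip: sum_distrib_left)
  finally show ?thesis using assms by linarith
qed

lemma ellipsoid_chord_expansion:
  fixes x y a :: "'a \<Rightarrow> real"
  assumes "(\<Sum>i\<in>I. (x i)^2 / a i) = 1" "(\<Sum>i\<in>I. (y i)^2 / a i) = 1"
  shows "(\<Sum>i\<in>I. (x i + s * (y i - x i))^2 / a i) = 1 + (s^2 - s) * (\<Sum>i\<in>I. (y i - x i)^2 / a i)"
proof -
  have "(\<Sum>i\<in>I. (x i + s * (y i - x i))^2 / a i)
      = (\<Sum>i\<in>I. (x i)^2 / a i + 2 * s * (x i * (y i - x i) / a i) + s^2 * ((y i - x i)^2 / a i))"
    by (intro sum.cong refl) (simp add: divide_inverse power2_eq_square algebra_simps)
  also have "\<dots> = (\<Sum>i\<in>I. (x i)^2 / a i) + 2 * s * (\<Sum>i\<in>I. x i * (y i - x i) / a i)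
      + s^2 * (\<Sum>i\<in>I. (y i - x i)^2 / a i)"
    by (simp only: sum.distrib flip: sum_distrib_left)
  also have "\<dots> = 1 + (s^2 - s) * (\<Sum>i\<in>I. (y i - x i)^2 / a i)"
    unfolding assms(1) ellipsoid_chord_cross_term[OF assms] by (simp add: algebra_simps)
  finally show ?thesis .
qed

lemma ellipsoid_chord_inside:
  fixes x y a :: "'a \<Rightarrow> real"
  assumes "\<And>i. i \<in> I \<Longrightarrow> 0 \<le> a i"
    and "(\<Sum>i\<in>I. (x i)^2 / a i) = 1" "(\<Sum>i\<in>I. (y i)^2 / a i) = 1"
    and "(\<Sum>i\<in>I. (x i + s * (y i - x i))^2 / a i) < 1"
  shows "0 < s" "s < 1"
proof -
  define B where "B = (\<Sum>i\<in>I. (y i - x i)^2 / a i)"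
  have "0 \<le> B" unfolding B_def using assms(1) by (intro sum_nonneg) simp
  moreover have "(s^2 - s) * B < 0"
    using assms(4) unfolding ellipsoid_chord_expansion[OF assms(2,3)] B_def by simp
  ultimately have "s^2 - s < 0" by (auto simp: mult_less_0_iff)
  then have "s * (s - 1) < 0" by (simp add: power2_eq_square algebra_simps)
  then show "0 < s" "s < 1" by (auto simp: mult_less_0_iff)
qed

lemma chord_opposite_sides:
  fixes x y a :: "'a \<Rightarrow> real"
  assumes fin: "finite I" and l: "l \<in> I" and al: "0 < a l"
    and above: "\<And>j. j \<in> I - {l} \<Longrightarrow> a l < a j"
    and qx: "(\<Sum>i\<in>I. (x i)^2 / a i) = 1" and qy: "(\<Sum>i\<in>I. (y i)^2 / a i) = 1"
    and G: "0 < (y l - x l)^2 - (\<Sum>j\<in>I-{l}. (x l * (y j - x j) - x j * (y l - x l))^2 / (a j - a l))"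
  shows "x l * y l < 0"
proof -
  define v where "v i = y i - x i" for i
  define S where "S = (\<Sum>j\<in>I-{l}. (x l * v j - x j * v l)^2 / (a j - a l))"
  have "0 \<le> S" unfolding S_def using above by (intro sum_nonneg divide_nonneg_nonneg) force+
  then have vl: "v l \<noteq> 0" using G by (auto simp: v_def S_def)
  define t where "t = - x l / v l"
  define z where "z i = x i + t * v i" for i
  have "(z j)^2 = (x l * v j - x j * v l)^2 / (v l)^2" for j
    using vl by (simp add: z_def t_def field_simps power2_eq_square)
  then have "(\<Sum>j\<in>I-{l}. (z j)^2 / (a j - a l)) = S / (v l)^2"
    by (simp add: S_def sum_divide_distrib mult.commute)
  also have "\<dots> < 1" using G vl by (simp add: v_def S_def divide_less_eq)
  finally have inner: "(\<Sum>j\<in>I-{l}. (z j)^2 / (a j - a l)) < 1" .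
  \<comment> \<open>the chord line meets the hyperplane x_l = 0 at z, and z lies inside the confocal
      ellipsoid Q_{a_l} of that hyperplane, hence inside Q\<close>
  have "(\<Sum>i\<in>I. (z i)^2 / a i) = (\<Sum>j\<in>I-{l}. (z j)^2 / a j)"
    using sum.remove[OF fin l, of "\<lambda>i. (z i)^2 / a i"] vl by (simp add: z_def t_def)
  also have "\<dots> \<le> (\<Sum>j\<in>I-{l}. (z j)^2 / (a j - a l))"
    using above al by (intro sum_mono divide_left_mono) force+
  finally have "(\<Sum>i\<in>I. (x i + t * (y i - x i))^2 / a i) < 1"
    using inner by (simp add: z_def v_def)
  moreover have "0 \<le> a i" if "i \<in> I" for i
    using above[of i] al that by (cases "i = l") auto
  ultimately have "0 < t" "t < 1" using ellipsoid_chord_inside[OF _ qx qy] by blast+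
  moreover have xl: "x l = - t * v l" and yl: "y l = (1 - t) * v l"
    using vl by (simp_all add: t_def v_def field_simps)
  then have "x l * y l = (t * (t - 1)) * (v l)^2"
    unfolding xl yl by (simp add: power2_eq_square algebra_simps)
  ultimately show ?thesis using vl by (simp add: mult_neg_pos mult_pos_neg)
qed

lemma poly_caustic_poly_zero:
  fixes x y a :: "nat \<Rightarrow> real"
  assumes "finite I" "\<And>k. k \<in> I \<Longrightarrow> a k \<noteq> 0"
    and "(\<Sum>i\<in>I. (x i)^2 / a i) = 1" "(\<Sum>i\<in>I. (y i)^2 / a i) = 1"
  shows "poly (caustic_poly I a x (\<lambda>i. y i - x i)) 0
    = (\<Prod>k\<in>I. a k) * (\<Sum>i\<in>I. (y i - x i)^2 / a i)^2 / 4"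
  using poly_caustic_poly_nonpole[OF assms(1), of a 0] assms
  by (simp add: ellipsoid_chord_cross_term power2_eq_square)

lemma point_distance_weighted_pos:
  fixes x y a :: "nat \<Rightarrow> real"
  assumes "\<And>i. i \<in> {1..n+1} \<Longrightarrow> 0 < a i" and "is_point n x" "is_point n y" "x \<noteq> y"
  shows "0 < (\<Sum>i=1..n+1. (y i - x i)^2 / a i)"
proof -
  obtain i where ne: "y i \<noteq> x i" using assms(4) by (metis ext)
  then have i: "i \<in> {1..n+1}" by (metis assms(2,3) is_point_def)
  then have "0 < (y i - x i)^2 / a i" using ne assms(1) by simp
  also have "\<dots> \<le> (\<Sum>i=1..n+1. (y i - x i)^2 / a i)"
    using assms(1) i by (intro member_le_sum) (auto intro!: divide_nonneg_pos)
  finally show ?thesis .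
qed

lemma chord_crosses_first_hyperplane:
  fixes x y a :: "nat \<Rightarrow> real"
  assumes a1: "0 < a 1" and above: "\<And>j. j \<in> {1..n+1} - {1} \<Longrightarrow> a 1 < a j"
    and xq: "x \<in> confocal n a 0" and yq: "y \<in> confocal n a 0" and "x \<noteq> y"
    and card: "card (caustic_params n a x y) = n"
    and caustics_above: "caustic_params n a x y \<subseteq> {a 1<..}"
  shows "x 1 * y 1 < 0"
proof -
  define I where "I = {1..n+1}"
  define P where "P = caustic_poly I a x (\<lambda>i. y i - x i)"
  define C where "C = caustic_params n a x y"
  have fin: "finite I" and one: "1 \<in> I" by (auto simp: I_def)
  have apos: "0 < a i" if "i \<in> I" for i
    using above[of i] a1 that by (cases "i = 1") (auto simp: I_def)
  have qx: "(\<Sum>i\<in>I. (x i)^2 / a i) = 1" and qy: "(\<Sum>i\<in>I. (y i)^2 / a i) = 1"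
    using xq yq by (simp_all add: confocal_def I_def)
  have C_roots: "C = {\<mu>. (\<forall>k\<in>I. a k \<noteq> \<mu>) \<and> poly P \<mu> = 0}"
    unfolding C_def P_def I_def by (rule caustic_params_eq_roots)
  have "0 < (\<Sum>i\<in>I. (y i - x i)^2 / a i)"
    unfolding I_def using apos xq yq \<open>x \<noteq> y\<close>
    by (intro point_distance_weighted_pos) (auto simp: I_def confocal_def)
  moreover have "0 < (\<Prod>k\<in>I. a k)" using apos by (intro prod_pos) auto
  moreover have "\<And>k. k \<in> I \<Longrightarrow> a k \<noteq> 0" using apos by force
  ultimately have P0: "0 < poly P 0"
    unfolding P_def by (simp add: poly_caustic_poly_zero[OF fin _ qx qy])
  then have "P \<noteq> 0" by auto
  have "poly P (a 1) \<noteq> 0"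
  proof
    assume "poly P (a 1) = 0"
    then have "insert (a 1) C \<subseteq> {\<mu>. poly P \<mu> = 0}" using C_roots by auto
    then have "card (insert (a 1) C) \<le> degree P"
      using card_mono[OF poly_roots_finite[OF \<open>P \<noteq> 0\<close>]] card_poly_roots_bound[OF \<open>P \<noteq> 0\<close>]
      by (meson order.trans)
    moreover have "finite C" using C_roots poly_roots_finite[OF \<open>P \<noteq> 0\<close>] by auto
    moreover have "a 1 \<notin> C" using caustics_above by (auto simp: C_def)
    moreover have "degree P \<le> n" unfolding P_def by (rule degree_caustic_poly) (auto simp: I_def)
    ultimately show False using card by (simp add: C_def)
  qed
  moreover have "\<not> poly P (a 1) < 0"
  proof
    assume "poly P (a 1) < 0"
    then obtain \<mu> where \<mu>: "0 < \<mu>" "\<mu> < a 1" "poly P \<mu> = 0"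
      using poly_IVT_neg[OF a1 P0] by blast
    have "\<forall>k\<in>I. a k \<noteq> \<mu>" using above \<mu>(2) by (force simp: I_def)
    then have "\<mu> \<in> C" using C_roots \<mu>(3) by blast
    then show False using caustics_above \<mu>(2) by (auto simp: C_def)
  qed
  ultimately have "0 < poly P (a 1)" by linarith
  moreover have "\<And>k. k \<in> I - {1} \<Longrightarrow> a k \<noteq> a 1" using above by (force simp: I_def)
  then have "poly P (a 1) = (\<Prod>k\<in>I-{1}. a k - a 1) *
     ((y 1 - x 1)^2 - (\<Sum>j\<in>I-{1}. (x 1 * (y j - x j) - x j * (y 1 - x 1))^2 / (a j - a 1)))"
    (is "_ = ?D * ?G") unfolding P_def by (rule poly_caustic_poly_pole[OF fin one])
  moreover have "0 < ?D" using above by (intro prod_pos) (auto simp: I_def)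
  ultimately have "0 < ?G" by (simp add: zero_less_mult_iff)
  then show ?thesis using above by (intro chord_opposite_sides[OF fin one a1 _ qx qy]) (auto simp: I_def)
qed

lemma sign_alternating:
  fixes s :: "nat \<Rightarrow> real"
  assumes "\<And>k. s k * s (Suc k) < 0"
  shows "0 < (-1)^k * s k * s 0"
proof (induction k)
  case 0
  show ?case using assms[of 0] by (auto simp: zero_less_mult_iff mult_less_0_iff)
next
  case (Suc k)
  have "0 < - (s k * s (Suc k))" using assms[of k] by simp
  from mult_pos_pos[OF this Suc.IH]
  have "0 < (- (s k * s (Suc k))) * ((-1)^k * s k * s 0)" .
  also have "\<dots> = ((-1)^(Suc k) * s (Suc k) * s 0) * (s k)^2"
    by (simp add: power2_eq_square algebra_simps)
  finally have "0 < ((-1)^(Suc k) * s (Suc k) * s 0) * (s k)^2" .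
  then show ?case using zero_le_power2[of "s k"] unfolding zero_less_mult_iff by linarith
qed

theorem corollary1:
  fixes n :: nat and a :: "nat \<Rightarrow> real" and p :: "nat \<Rightarrow> nat \<Rightarrow> real"
    and lam :: "nat \<Rightarrow> real" and m :: nat
  assumes "n \<ge> 1"
    and "0 < a 1" and "\<And>i. i \<in> {1..n} \<Longrightarrow> a i < a (Suc i)"
    and "billiard_trajectory n a p"
    and "\<And>i. i \<in> {1..<n} \<Longrightarrow> lam i < lam (Suc i)"
    and "\<And>k. caustic_params n a (p k) (p (Suc k)) = lam ` {1..n}"
    and "0 < lam 1"
    and "\<And>i. i \<in> {1..n} \<Longrightarrow>
           lam i \<in> {(if i = 1 then 0 else a (i - 1))<..<a i} \<union> {a i<..<a (Suc i)}"
    and "odd m" and "\<And>k. p (k + m) = p k"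
  shows "lam 1 \<in> {0<..<a 1}"
proof (rule ccontr)
  assume "lam 1 \<notin> {0<..<a 1}"
  then have "a 1 < lam 1" using assms(1) assms(8)[of 1] by auto
  have lam_less: "lam i < lam j" if "1 \<le> i" "i < j" "j \<le> n" for i j
    by (rule lift_Suc_mono_less_ivl[of "{1..<n}"]) (use assms(5) that in auto)
  have "inj_on lam {1..n}"
  proof (rule inj_onI)
    fix i j assume "i \<in> {1..n}" "j \<in> {1..n}" "lam i = lam j"
    then show "i = j" using lam_less[of i j] lam_less[of j i] by (cases i j rule: linorder_cases) auto
  qed
  then have card: "card (caustic_params n a (p k) (p (Suc k))) = n" for k
    by (simp add: assms(6) card_image)
  have "a 1 < lam i" if "i \<in> {1..n}" for i
    using \<open>a 1 < lam 1\<close> lam_less[of 1 i] that by (cases "i = 1") auto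
  then have above: "caustic_params n a (p k) (p (Suc k)) \<subseteq> {a 1<..}" for k
    by (auto simp: assms(6))
  have "a 1 < a j" if "j \<in> {1..n+1} - {1}" for j
    by (rule lift_Suc_mono_less_ivl[of "{1..n}"]) (use assms(3) that in auto)
  moreover have "p k \<in> confocal n a 0" "p k \<noteq> p (Suc k)" for k
    using assms(4) unfolding billiard_trajectory_def by (blast, metis)
  ultimately have "p k 1 * p (Suc k) 1 < 0" for k
    using chord_crosses_first_hyperplane[OF assms(2) _ _ _ _ card above] by blast
  then have "0 < (-1)^m * p m 1 * p 0 1" by (rule sign_alternating)
  moreover have "p m = p 0" using assms(10)[of 0] by simp
  ultimately show False using \<open>odd m\<close> by simp
qed

end
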